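(* Let $S$ be a finite poset and let $L=(L_{x,y})_{x,y\in S}$ be the infinitesimal generator of a continuous-time Markov chain on $S$. Then $L$ is the generator of a realizably monotone Markov chain if and only if there exists a function $\Lambda:\mathcal{M}\to[0,\infty)$ such that \[ L_{x,y}=\sum_{f\in\mathcal{M}:\,f(x)=y}\Lambda(f)\qquad\text{for all }x,y\in S,\ x\neq y . \]
   Context: A generator on a finite set $S$ is a real matrix $L=(L_{x,y})_{x,y\in S}$ with $L_{x,y}\ge 0$ for $x\neq y$ and $L_{x,x}=-\sum_{y\neq x}L_{x,y}$; all Markov chains are time-homogeneous and, in continuous time, regular (finitely many jumps in bounded time intervals a.s.). $\mathcal{M}$ denotes the set of increasing maps $f:S\to S$ (i.e. $x\le y\Rightarrow f(x)\le f(y)$). A continuous-time Markov chain on $S$ with transition probabilities $P_t(x,y)$ is realizably monotone if there is a Markov chain $(\xi_t)_{t\ge0}$ with values in $S^S$ (maps $S\to S$) such that $\xi_0=\mathrm{Id}$; for each $z\in S$, $(\xi_t(z))_{t\ge 0}$ is a Markov chain with transition probabilities $P_t$; and $w\le z$ implies $\xi_t(w)\le\xi_t(z)$ for all $t\ge 0$. A generator is called realizably monotone if it generates a realizably monotone chain. *)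

theory Defs
  imports Complex_Main
begin

definition mmult :: "('s::finite \<Rightarrow> 's \<Rightarrow> real) \<Rightarrow> ('s \<Rightarrow> 's \<Rightarrow> real) \<Rightarrow> 's \<Rightarrow> 's \<Rightarrow> real" where
  "mmult A B x y = (\<Sum>z\<in>UNIV. A x z * B z y)"

fun mpow :: "('s::finite \<Rightarrow> 's \<Rightarrow> real) \<Rightarrow> nat \<Rightarrow> 's \<Rightarrow> 's \<Rightarrow> real" where
  "mpow A 0 = (\<lambda>x y. if x = y then 1 else 0)"
| "mpow A (Suc n) = mmult (mpow A n) A"

definition mexp :: "real \<Rightarrow> ('s::finite \<Rightarrow> 's \<Rightarrow> real) \<Rightarrow> 's \<Rightarrow> 's \<Rightarrow> real" where
  "mexp t A x y = (\<Sum>n. t ^ n / fact n * mpow A n x y)"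

definition is_generator :: "('s::finite \<Rightarrow> 's \<Rightarrow> real) \<Rightarrow> bool" where
  "is_generator L \<longleftrightarrow> (\<forall>x y. x \<noteq> y \<longrightarrow> L x y \<ge> 0) \<and>
     (\<forall>x. L x x = - (\<Sum>y\<in>UNIV - {x}. L x y))"

text \<open>Finite-dimensional distributions of the chain with generator Q started at g:
  probability of being at hs!0, hs!1, ... at successive times with nonnegative
  increments ds!0, ds!1, ...\<close>
fun path_prob :: "('s::finite \<Rightarrow> 's \<Rightarrow> real) \<Rightarrow> 's \<Rightarrow> real list \<Rightarrow> 's list \<Rightarrow> real" where
  "path_prob Q g [] [] = 1"
| "path_prob Q g (d # ds) (h # hs) = mexp d Q g h * path_prob Q h ds hs"
| "path_prob Q g _ _ = 0"

text \<open>Finite-dimensional distributions of the coordinate process (xi_t(z)) of a chain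
  on maps S \<Rightarrow> S with generator Q started at the identity.\<close>
definition coord_fdd :: "(('a::finite \<Rightarrow> 'a) \<Rightarrow> ('a \<Rightarrow> 'a) \<Rightarrow> real) \<Rightarrow> 'a \<Rightarrow> real list \<Rightarrow> 'a list \<Rightarrow> real" where
  "coord_fdd Q z ds ys =
     (\<Sum>hs \<in> {hs. length hs = length ys \<and> (\<forall>i<length ys. (hs ! i) z = ys ! i)}. path_prob Q id ds hs)"

text \<open>L generates a realizably monotone chain: there is a Markov chain (xi_t) on S^S
  (given by its generator Q) with xi_0 = Id, each coordinate (xi_t(z)) a Markov chain
  with transition probabilities exp(t L) started at z, and xi_t monotone a.s.\<close>
definition realizably_monotone :: "('a::{finite,order} \<Rightarrow> 'a \<Rightarrow> real) \<Rightarrow> bool" where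
  "realizably_monotone L \<longleftrightarrow>
     (\<exists>Q :: ('a \<Rightarrow> 'a) \<Rightarrow> ('a \<Rightarrow> 'a) \<Rightarrow> real.
        is_generator Q \<and>
        (\<forall>z ds ys. length ds = length ys \<longrightarrow> (\<forall>d\<in>set ds. d \<ge> 0) \<longrightarrow>
            coord_fdd Q z ds ys = path_prob L z ds ys) \<and>
        (\<forall>t\<ge>0. (\<Sum>g\<in>{g. mono g}. mexp t Q id g) = 1))"

end

theory Submission
  imports Defs
begin

text \<open>
  If \<open>L\<close> is realized by a chain on maps with generator \<open>Q\<close>, take \<open>\<Lambda> f = Q id f\<close>:
  differentiating the one-time marginals at \<open>t = 0\<close> shows that the jump rate of the
  coordinate process from \<open>x\<close> to \<open>y\<close> is the total rate \<open>Q id h\<close> over the maps \<open>h\<close>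
  with \<open>h x = y\<close>, and since the chain started at \<open>id\<close> stays among the monotone maps,
  \<open>Q id h = 0\<close> for every non-monotone \<open>h\<close>.
  Conversely, let the chain on maps jump from \<open>g\<close> to \<open>f \<circ> g\<close> at rate \<open>\<Lambda> f\<close>. Each
  evaluation \<open>g \<mapsto> g z\<close> lumps it onto the chain with generator \<open>L\<close>, which gives the
  required finite-dimensional distributions, and composing with monotone maps preserves
  monotonicity.
\<close>

definition abs_entry_sum :: "('s::finite \<Rightarrow> 's \<Rightarrow> real) \<Rightarrow> real" where
  "abs_entry_sum A = (\<Sum>x\<in>UNIV. \<Sum>y\<in>UNIV. \<bar>A x y\<bar>)"

lemma abs_mpow_le: "\<bar>mpow A n x y\<bar> \<le> abs_entry_sum A ^ n"
proof (induction n arbitrary: y)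
  case 0
  then show ?case by simp
next
  case (Suc n)
  have col: "(\<Sum>z\<in>UNIV. \<bar>A z y\<bar>) \<le> abs_entry_sum A"
    unfolding abs_entry_sum_def by (intro sum_mono member_le_sum) auto
  have "0 \<le> abs_entry_sum A"
    unfolding abs_entry_sum_def by (intro sum_nonneg) auto
  have "\<bar>mpow A (Suc n) x y\<bar> = \<bar>\<Sum>z\<in>UNIV. mpow A n x z * A z y\<bar>"
    by (simp add: mmult_def)
  also have "\<dots> \<le> (\<Sum>z\<in>UNIV. \<bar>mpow A n x z\<bar> * \<bar>A z y\<bar>)"
    unfolding abs_mult[symmetric] by (rule sum_abs)
  also have "\<dots> \<le> (\<Sum>z\<in>UNIV. abs_entry_sum A ^ n * \<bar>A z y\<bar>)"
    by (intro sum_mono mult_right_mono Suc.IH) auto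
  also have "\<dots> \<le> abs_entry_sum A ^ n * abs_entry_sum A"
    unfolding sum_distrib_left[symmetric]
    using col \<open>0 \<le> abs_entry_sum A\<close> by (intro mult_left_mono) simp_all
  finally show ?case by (simp add: mult.commute)
qed

lemma summable_mpow_power_series: "summable (\<lambda>n. mpow A n x y / fact n * t ^ n)"
proof (rule summable_comparison_test')
  show "summable (\<lambda>n. inverse (fact n) * (abs_entry_sum A * \<bar>t\<bar>) ^ n)"
    by (rule summable_exp)
  fix n
  have "norm (mpow A n x y / fact n * t ^ n) = \<bar>mpow A n x y\<bar> * \<bar>t\<bar> ^ n / fact n"
    by (simp add: abs_mult power_abs)
  also have "\<dots> \<le> abs_entry_sum A ^ n * \<bar>t\<bar> ^ n / fact n"
    by (intro divide_right_mono mult_right_mono abs_mpow_le) auto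
  finally show "norm (mpow A n x y / fact n * t ^ n) \<le> inverse (fact n) * (abs_entry_sum A * \<bar>t\<bar>) ^ n"
    by (simp add: field_simps)
qed

lemma mexp_eq_power_series: "mexp t A x y = (\<Sum>n. mpow A n x y / fact n * t ^ n)"
  unfolding mexp_def by (simp add: field_simps)

lemma summable_mexp: "summable (\<lambda>n. t ^ n / fact n * mpow A n x y)"
  using summable_mpow_power_series[of A x y t] by (simp add: field_simps)

lemma mpow_Suc_0: "mpow A (Suc 0) x y = A x y"
proof -
  have "(\<lambda>z. (if x = z then 1 else 0) * A z y) = (\<lambda>z. if x = z then A z y else 0)"
    by auto
  then show ?thesis by (simp only: mpow.simps mmult_def) simp
qed

lemma DERIV_mexp_0: "((\<lambda>t. mexp t A x y) has_field_derivative A x y) (at 0)"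
proof -
  have "((\<lambda>t. \<Sum>n. mpow A n x y / fact n * t ^ n) has_field_derivative
      (\<Sum>n. diffs (\<lambda>n. mpow A n x y / fact n) n * 0 ^ n)) (at 0)"
    by (intro termdiffs_strong_converges_everywhere summable_mpow_power_series)
  moreover have "(\<lambda>n. diffs (\<lambda>n. mpow A n x y / fact n) n * 0 ^ n) =
      (\<lambda>n. if n = 0 then A x y else 0)"
    by (auto simp: diffs_def fun_eq_iff mpow_Suc_0 simp del: mpow.simps)
  ultimately show ?thesis
    unfolding mexp_eq_power_series using sums_single[of 0 "\<lambda>_. A x y"] by (simp add: sums_iff)
qed

lemma DERIV_unique_nonneg:
  fixes F G :: "real \<Rightarrow> real"
  assumes "(F has_field_derivative a) (at 0)" "(G has_field_derivative b) (at 0)"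
    and "\<And>t. t \<ge> 0 \<Longrightarrow> F t = G t"
  shows "a = b"
proof (rule has_field_derivative_unique)
  have "eventually (\<lambda>t. F t = G t) (at 0 within {0..})"
    by (auto simp: eventually_at_filter assms(3))
  from has_field_derivative_cong_eventually[OF this assms(3)]
  show "(G has_field_derivative a) (at 0 within {0..})"
    using has_field_derivative_at_within[OF assms(1)] by blast
  show "(G has_field_derivative b) (at 0 within {0..})"
    using assms(2) by (rule has_field_derivative_at_within)
qed (simp add: at_within_Ici_at_right)

lemma DERIV_sum_mexp_0:
  "((\<lambda>t. \<Sum>h\<in>H. mexp t Q g h) has_field_derivative (\<Sum>h\<in>H. Q g h)) (at 0)"
  by (intro DERIV_sum DERIV_mexp_0)

lemma sum_mexp: "(\<Sum>h\<in>H. mexp t Q g h) = (\<Sum>n. t ^ n / fact n * (\<Sum>h\<in>H. mpow Q n g h))"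
  unfolding mexp_def sum_distrib_left by (rule suminf_sum[symmetric]) (rule summable_mexp)

lemma generator_row_sum: "is_generator Q \<Longrightarrow> (\<Sum>h\<in>UNIV. Q g h) = 0"
  unfolding is_generator_def by (subst sum.remove[of UNIV g]) auto

lemma mpow_row_sum:
  assumes "is_generator Q"
  shows "(\<Sum>h\<in>UNIV. mpow Q n g h) = (if n = 0 then 1 else 0)"
proof (cases n)
  case (Suc m)
  have "(\<Sum>h\<in>UNIV. mpow Q n g h) = (\<Sum>k\<in>UNIV. mpow Q m g k * (\<Sum>h\<in>UNIV. Q k h))"
    unfolding Suc mpow.simps mmult_def sum_distrib_left by (rule sum.swap)
  then show ?thesis
    using Suc generator_row_sum[OF assms] by simp
qed simp

lemma mexp_row_sum: "is_generator Q \<Longrightarrow> (\<Sum>h\<in>UNIV. mexp t Q g h) = 1"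
  using sums_single[of 0 "\<lambda>_. 1::real"]
  by (simp add: sum_mexp mpow_row_sum sums_iff if_distrib[of "(*) _"] cong: if_cong)

lemma mpow_eq_0_outside_closed:
  assumes closed: "\<And>g h. g \<in> C \<Longrightarrow> h \<notin> C \<Longrightarrow> Q g h = 0"
    and "g \<in> C" "h \<notin> C"
  shows "mpow Q n g h = 0"
  using \<open>h \<notin> C\<close>
proof (induction n arbitrary: h)
  case 0
  then show ?case using \<open>g \<in> C\<close> by auto
next
  case (Suc n)
  have "mpow Q n g k * Q k h = 0" for k
    by (cases "k \<in> C") (simp_all add: closed Suc)
  then show ?case by (simp add: mmult_def del: mult_eq_0_iff)
qed

lemma sum_mexp_closed:
  assumes "is_generator Q"
    and closed: "\<And>g h. g \<in> C \<Longrightarrow> h \<notin> C \<Longrightarrow> Q g h = 0"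
    and "g \<in> C"
  shows "(\<Sum>h\<in>C. mexp t Q g h) = 1"
proof -
  have "(\<Sum>h\<in>C. mexp t Q g h) = (\<Sum>h\<in>UNIV. mexp t Q g h)"
    by (rule sum.mono_neutral_left)
      (auto simp: mexp_def mpow_eq_0_outside_closed[OF closed \<open>g \<in> C\<close>])
  then show ?thesis using mexp_row_sum[OF assms(1)] by simp
qed

lemma generator_row_vanishes_outside:
  assumes "is_generator Q" "g \<in> C" "(\<Sum>h\<in>C. Q g h) = 0" "h \<notin> C"
  shows "Q g h = 0"
proof -
  have nonneg: "Q g k \<ge> 0" if "k \<in> UNIV - C" for k
  proof -
    have "g \<noteq> k" using that assms(2) by blast
    then show ?thesis using assms(1) unfolding is_generator_def by blast
  qed
  have "(\<Sum>k\<in>UNIV. Q g k) = (\<Sum>k\<in>UNIV - C. Q g k) + (\<Sum>k\<in>C. Q g k)"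
    by (rule sum.subset_diff) auto
  then have "(\<Sum>k\<in>UNIV - C. Q g k) = 0"
    using generator_row_sum[OF assms(1), of g] assms(3) by linarith
  then have "\<forall>k\<in>UNIV - C. Q g k = 0"
    by (subst (asm) sum_nonneg_eq_0_iff) (auto intro: nonneg)
  then show ?thesis
    using assms(4) by blast
qed

definition lumpable :: "('b \<Rightarrow> 'a) \<Rightarrow> ('b::finite \<Rightarrow> 'b \<Rightarrow> real) \<Rightarrow> ('a \<Rightarrow> 'a \<Rightarrow> real) \<Rightarrow> bool" where
  "lumpable \<pi> Q L \<longleftrightarrow> (\<forall>g y. (\<Sum>h\<in>{h. \<pi> h = y}. Q g h) = L (\<pi> g) y)"

lemma sum_fibres:
  fixes \<pi> :: "'b::finite \<Rightarrow> 'a::finite"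
  shows "(\<Sum>w\<in>UNIV. \<Sum>k\<in>{k. \<pi> k = w}. f k) = (\<Sum>k\<in>UNIV. f k)"
  using sum.group[of UNIV UNIV \<pi> f] by simp

lemma lumpableI_off_diagonal:
  fixes \<pi> :: "'b::finite \<Rightarrow> 'a::finite"
  assumes "is_generator Q" "is_generator L"
    and off: "\<And>g y. y \<noteq> \<pi> g \<Longrightarrow> (\<Sum>h\<in>{h. \<pi> h = y}. Q g h) = L (\<pi> g) y"
  shows "lumpable \<pi> Q L"
  unfolding lumpable_def
proof (intro allI)
  fix g y
  define S where "S w = (\<Sum>h\<in>{h. \<pi> h = w}. Q g h)" for w
  have "0 = (\<Sum>w\<in>UNIV. S w)"
    unfolding S_def sum_fibres by (rule generator_row_sum[OF assms(1), symmetric])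
  also have "\<dots> = S (\<pi> g) + (\<Sum>w\<in>UNIV - {\<pi> g}. S w)"
    by (rule sum.remove) auto
  also have "(\<Sum>w\<in>UNIV - {\<pi> g}. S w) = (\<Sum>w\<in>UNIV - {\<pi> g}. L (\<pi> g) w)"
    by (rule sum.cong) (auto simp: S_def off)
  also have "\<dots> = - L (\<pi> g) (\<pi> g)"
    using assms(2) unfolding is_generator_def by simp
  finally show "S y = L (\<pi> g) y"
    by (cases "y = \<pi> g") (simp_all add: S_def off)
qed

lemma lumpable_mpow:
  fixes \<pi> :: "'b::finite \<Rightarrow> 'a::finite"
  assumes "lumpable \<pi> Q L"
  shows "(\<Sum>h\<in>{h. \<pi> h = y}. mpow Q n g h) = mpow L n (\<pi> g) y"
proof (induction n arbitrary: y)
  case 0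
  show ?case by simp
next
  case (Suc n)
  have "(\<Sum>h\<in>{h. \<pi> h = y}. mpow Q (Suc n) g h)
      = (\<Sum>k\<in>UNIV. mpow Q n g k * (\<Sum>h\<in>{h. \<pi> h = y}. Q k h))"
    unfolding mpow.simps mmult_def sum_distrib_left by (rule sum.swap)
  also have "\<dots> = (\<Sum>k\<in>UNIV. mpow Q n g k * L (\<pi> k) y)"
    using assms by (simp add: lumpable_def)
  also have "\<dots> = (\<Sum>w\<in>UNIV. \<Sum>k\<in>{k. \<pi> k = w}. mpow Q n g k * L (\<pi> k) y)"
    by (rule sum_fibres[symmetric])
  also have "\<dots> = (\<Sum>w\<in>UNIV. (\<Sum>k\<in>{k. \<pi> k = w}. mpow Q n g k) * L w y)"
    unfolding sum_distrib_right by (intro sum.cong) auto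
  finally show ?case by (simp add: Suc mmult_def)
qed

lemma lumpable_mexp:
  fixes \<pi> :: "'b::finite \<Rightarrow> 'a::finite"
  assumes "lumpable \<pi> Q L"
  shows "(\<Sum>h\<in>{h. \<pi> h = y}. mexp t Q g h) = mexp t L (\<pi> g) y"
proof -
  have "(\<Sum>h\<in>{h. \<pi> h = y}. mexp t Q g h)
      = (\<Sum>n. t ^ n / fact n * (\<Sum>h\<in>{h. \<pi> h = y}. mpow Q n g h))"
    by (rule sum_mexp)
  then show ?thesis
    by (simp only: lumpable_mpow[OF assms] mexp_def)
qed

lemma lumpable_path_prob:
  fixes \<pi> :: "'b::finite \<Rightarrow> 'a::finite"
  assumes "lumpable \<pi> Q L" "length ds = length ys"
  shows "(\<Sum>hs\<in>{hs. map \<pi> hs = ys}. path_prob Q g ds hs) = path_prob L (\<pi> g) ds ys"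
  using assms(2)
proof (induction ds ys arbitrary: g rule: list_induct2)
  case Nil
  have "{hs. map \<pi> hs = []} = {[]}" by auto
  then show ?case by simp
next
  case (Cons d ds y ys)
  have split: "{hs. map \<pi> hs = y # ys} = (\<lambda>(h, hs). h # hs) ` ({h. \<pi> h = y} \<times> {hs. map \<pi> hs = ys})"
    by (auto simp: map_eq_Cons_conv)
  have "(\<Sum>hs\<in>{hs. map \<pi> hs = y # ys}. path_prob Q g (d # ds) hs)
      = (\<Sum>(h, hs)\<in>{h. \<pi> h = y} \<times> {hs. map \<pi> hs = ys}. mexp d Q g h * path_prob Q h ds hs)"
    unfolding split by (subst sum.reindex) (auto simp: inj_on_def intro!: sum.cong)
  also have "\<dots> = (\<Sum>h\<in>{h. \<pi> h = y}. mexp d Q g h * (\<Sum>hs\<in>{hs. map \<pi> hs = ys}. path_prob Q h ds hs))"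
    by (simp add: sum.cartesian_product[symmetric] sum_distrib_left)
  also have "\<dots> = mexp d L (\<pi> g) y * path_prob L y ds ys"
    by (simp add: Cons.IH sum_distrib_right[symmetric] lumpable_mexp[OF assms(1)])
  finally show ?case by simp
qed

lemma mono_id: "mono (id :: 'a::order \<Rightarrow> 'a)"
  by (simp add: mono_def)

lemma coord_fdd_eq_sum_map:
  "coord_fdd Q z ds ys = (\<Sum>hs\<in>{hs. map (\<lambda>h. h z) hs = ys}. path_prob Q id ds hs)"
proof -
  have "{hs. length hs = length ys \<and> (\<forall>i<length ys. (hs ! i) z = ys ! i)}
      = {hs. map (\<lambda>h. h z) hs = ys}"
    by (auto simp: list_eq_iff_nth_eq)
  then show ?thesis unfolding coord_fdd_def by simp
qed

lemma coord_fdd_single: "coord_fdd Q z [t] [y] = (\<Sum>h\<in>{h. h z = y}. mexp t Q id h)"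
proof -
  have "{hs. map (\<lambda>h. h z) hs = [y]} = (\<lambda>h. [h]) ` {h. h z = y}"
    by (auto simp: map_eq_Cons_conv)
  then show ?thesis
    unfolding coord_fdd_eq_sum_map by (simp add: sum.reindex inj_on_def)
qed

definition map_jump_generator :: "(('a::finite \<Rightarrow> 'a) \<Rightarrow> real) \<Rightarrow> ('a \<Rightarrow> 'a) \<Rightarrow> ('a \<Rightarrow> 'a) \<Rightarrow> real" where
  "map_jump_generator \<Lambda> g h =
     (if g = h then - (\<Sum>k\<in>UNIV - {g}. \<Sum>f\<in>{f. f \<circ> g = k}. \<Lambda> f)
      else (\<Sum>f\<in>{f. f \<circ> g = h}. \<Lambda> f))"

lemma is_generator_map_jump_generator:
  assumes "\<And>f. \<Lambda> f \<ge> 0"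
  shows "is_generator (map_jump_generator \<Lambda>)"
  unfolding is_generator_def
proof (intro conjI allI impI)
  fix g h :: "'a \<Rightarrow> 'a"
  assume "g \<noteq> h"
  then show "map_jump_generator \<Lambda> g h \<ge> 0"
    by (simp add: map_jump_generator_def assms sum_nonneg)
next
  fix g :: "'a \<Rightarrow> 'a"
  show "map_jump_generator \<Lambda> g g = - (\<Sum>k\<in>UNIV - {g}. map_jump_generator \<Lambda> g k)"
    by (simp add: map_jump_generator_def)
qed

lemma lumpable_map_jump_generator:
  fixes L :: "'a::finite \<Rightarrow> 'a \<Rightarrow> real"
  assumes "is_generator L" "\<And>f. \<Lambda> f \<ge> 0"
    and rates: "\<And>x y. x \<noteq> y \<Longrightarrow> L x y = (\<Sum>f\<in>{f. f x = y}. \<Lambda> f)"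
  shows "lumpable (\<lambda>h. h z) (map_jump_generator \<Lambda>) L"
proof (rule lumpableI_off_diagonal[OF is_generator_map_jump_generator[OF assms(2)] assms(1)])
  fix g :: "'a \<Rightarrow> 'a" and y
  assume ne: "y \<noteq> g z"
  have "(\<Sum>h\<in>{h. h z = y}. map_jump_generator \<Lambda> g h)
      = (\<Sum>h\<in>{h. h z = y}. \<Sum>f\<in>{f \<in> {f. f (g z) = y}. f \<circ> g = h}. \<Lambda> f)"
  proof (rule sum.cong[OF refl])
    fix h :: "'a \<Rightarrow> 'a"
    assume "h \<in> {h. h z = y}"
    then have "g \<noteq> h"
      using ne by auto
    moreover have "{f. f \<circ> g = h} = {f \<in> {f. f (g z) = y}. f \<circ> g = h}"
      using \<open>h \<in> {h. h z = y}\<close> by (auto simp: fun_eq_iff)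
    ultimately show "map_jump_generator \<Lambda> g h = (\<Sum>f\<in>{f \<in> {f. f (g z) = y}. f \<circ> g = h}. \<Lambda> f)"
      by (simp add: map_jump_generator_def)
  qed
  also have "\<dots> = (\<Sum>f\<in>{f. f (g z) = y}. \<Lambda> f)"
    by (rule sum.group) auto
  finally show "(\<Sum>h\<in>{h. h z = y}. map_jump_generator \<Lambda> g h) = L (g z) y"
    using rates[OF ne[symmetric]] by simp
qed

lemma map_jump_generator_preserves_mono:
  fixes g h :: "'a::{finite,order} \<Rightarrow> 'a"
  assumes "\<And>f. \<not> mono f \<Longrightarrow> \<Lambda> f = 0" "mono g" "\<not> mono h"
  shows "map_jump_generator \<Lambda> g h = 0"
proof -
  have "g \<noteq> h" using assms by auto
  moreover have "\<Lambda> f = 0" if "f \<circ> g = h" for f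
  proof -
    have "\<not> mono f"
    proof
      assume "mono f"
      then have "mono (f \<circ> g)"
        using assms(2) by (auto simp: mono_def)
      then show False
        using assms(3) that by simp
    qed
    then show ?thesis by (rule assms(1))
  qed
  ultimately show ?thesis by (simp add: map_jump_generator_def)
qed

lemma realizably_monotone_imp_rates:
  fixes L :: "'a::{finite,order} \<Rightarrow> 'a \<Rightarrow> real"
  assumes "realizably_monotone L"
  shows "\<exists>\<Lambda>. (\<forall>f. mono f \<longrightarrow> \<Lambda> f \<ge> 0) \<and>
    (\<forall>x y. x \<noteq> y \<longrightarrow> L x y = (\<Sum>f\<in>{f. mono f \<and> f x = y}. \<Lambda> f))"
proof -
  obtain Q :: "('a \<Rightarrow> 'a) \<Rightarrow> ('a \<Rightarrow> 'a) \<Rightarrow> real" where gQ: "is_generator Q"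
    and fdd: "\<And>z ds ys. length ds = length ys \<Longrightarrow> \<forall>d\<in>set ds. d \<ge> 0 \<Longrightarrow>
      coord_fdd Q z ds ys = path_prob L z ds ys"
    and mono_mass: "\<And>t. t \<ge> 0 \<Longrightarrow> (\<Sum>g\<in>{g. mono g}. mexp t Q id g) = 1"
    using assms unfolding realizably_monotone_def by blast
  have mono_row: "(\<Sum>h\<in>{h. mono h}. Q id h) = 0"
  proof (rule DERIV_unique_nonneg)
    show "((\<lambda>t. \<Sum>h\<in>{h. mono h}. mexp t Q id h) has_field_derivative (\<Sum>h\<in>{h. mono h}. Q id h)) (at 0)"
      by (rule DERIV_sum_mexp_0)
    show "((\<lambda>t. 1) has_field_derivative 0) (at 0)"
      by (rule DERIV_const)
  qed (rule mono_mass)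
  have non_mono: "Q id h = 0" if "\<not> mono h" for h
    using generator_row_vanishes_outside[of Q id "{h. mono h}" h] gQ mono_row mono_id that
    by simp
  have coord_rates: "(\<Sum>h\<in>{h. h x = y}. Q id h) = L x y" for x y
  proof (rule DERIV_unique_nonneg)
    show "((\<lambda>t. \<Sum>h\<in>{h. h x = y}. mexp t Q id h) has_field_derivative (\<Sum>h\<in>{h. h x = y}. Q id h)) (at 0)"
      by (rule DERIV_sum_mexp_0)
    show "((\<lambda>t. mexp t L x y) has_field_derivative L x y) (at 0)"
      by (rule DERIV_mexp_0)
    fix t :: real
    assume "t \<ge> 0"
    then show "(\<Sum>h\<in>{h. h x = y}. mexp t Q id h) = mexp t L x y"
      using fdd[of "[t]" "[y]" x] by (simp add: coord_fdd_single)
  qed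
  define \<Lambda> where "\<Lambda> f = (if f = id then 0 else Q id f)" for f
  show ?thesis
  proof (intro exI conjI allI impI)
    fix f :: "'a \<Rightarrow> 'a"
    show "\<Lambda> f \<ge> 0" using gQ unfolding \<Lambda>_def is_generator_def by auto
  next
    fix x y :: 'a
    assume "x \<noteq> y"
    have "L x y = (\<Sum>h\<in>{h. h x = y}. Q id h)" by (rule coord_rates[symmetric])
    also have "\<dots> = (\<Sum>h\<in>{h. mono h \<and> h x = y}. Q id h)"
      by (rule sum.mono_neutral_right) (auto intro: non_mono)
    also have "\<dots> = (\<Sum>h\<in>{h. mono h \<and> h x = y}. \<Lambda> h)"
      using \<open>x \<noteq> y\<close> by (intro sum.cong) (auto simp: \<Lambda>_def)
    finally show "L x y = (\<Sum>f\<in>{f. mono f \<and> f x = y}. \<Lambda> f)" .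
  qed
qed

lemma rates_imp_realizably_monotone:
  fixes L :: "'a::{finite,order} \<Rightarrow> 'a \<Rightarrow> real"
  assumes "is_generator L" and nonneg: "\<forall>f. mono f \<longrightarrow> \<Lambda> f \<ge> 0"
    and rates: "\<forall>x y. x \<noteq> y \<longrightarrow> L x y = (\<Sum>f\<in>{f. mono f \<and> f x = y}. \<Lambda> f)"
  shows "realizably_monotone L"
proof -
  define \<Lambda>\<^sub>0 where "\<Lambda>\<^sub>0 f = (if mono f then \<Lambda> f else 0)" for f
  define Q where "Q = map_jump_generator \<Lambda>\<^sub>0"
  have nonneg\<^sub>0: "\<Lambda>\<^sub>0 f \<ge> 0" for f
    using nonneg by (simp add: \<Lambda>\<^sub>0_def)
  have "L x y = (\<Sum>f\<in>{f. f x = y}. \<Lambda>\<^sub>0 f)" if "x \<noteq> y" for x y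
  proof -
    have "(\<Sum>f\<in>{f. f x = y}. \<Lambda>\<^sub>0 f) = (\<Sum>f\<in>{f \<in> {f. f x = y}. mono f}. \<Lambda> f)"
      unfolding \<Lambda>\<^sub>0_def by (rule sum.inter_filter[symmetric]) simp
    also have "{f \<in> {f. f x = y}. mono f} = {f. mono f \<and> f x = y}"
      by blast
    finally show ?thesis using rates that by simp
  qed
  then have lump: "lumpable (\<lambda>h. h z) Q L" for z
    unfolding Q_def by (rule lumpable_map_jump_generator[OF assms(1) nonneg\<^sub>0])
  have gQ: "is_generator Q"
    unfolding Q_def by (rule is_generator_map_jump_generator[OF nonneg\<^sub>0])
  have closed: "Q g h = 0" if "g \<in> {g. mono g}" "h \<notin> {g. mono g}" for g h
    unfolding Q_def by (rule map_jump_generator_preserves_mono) (use that in \<open>auto simp: \<Lambda>\<^sub>0_def\<close>)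
  show ?thesis
    unfolding realizably_monotone_def
  proof (intro exI conjI allI impI)
    fix z :: 'a and ds :: "real list" and ys :: "'a list"
    assume "length ds = length ys"
    then show "coord_fdd Q z ds ys = path_prob L z ds ys"
      using lumpable_path_prob[OF lump, of ds ys id] by (simp add: coord_fdd_eq_sum_map)
  next
    fix t :: real
    show "(\<Sum>g\<in>{g. mono g}. mexp t Q id g) = 1"
      using sum_mexp_closed[OF gQ closed] mono_id by blast
  qed (rule gQ)
qed

theorem proposition2p1:
  fixes L :: "'a::{finite,order} \<Rightarrow> 'a \<Rightarrow> real"
  assumes "is_generator L"
  shows "realizably_monotone L \<longleftrightarrow>
    (\<exists>\<Lambda> :: ('a \<Rightarrow> 'a) \<Rightarrow> real. (\<forall>f. mono f \<longrightarrow> \<Lambda> f \<ge> 0) \<and>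
       (\<forall>x y. x \<noteq> y \<longrightarrow> L x y = (\<Sum>f\<in>{f. mono f \<and> f x = y}. \<Lambda> f)))"
  using realizably_monotone_imp_rates rates_imp_realizably_monotone[OF assms] by blast

end
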